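(* Let $\varphi$ be a primitive $k$-uniform morphism on $\{0,1\}$ and let $w$ be an infinite fixed point of $\varphi$. The following are equivalent: 1. $w$ is bounded weak abelian periodic; 2. $w$ is abelian periodic; 3. $\varphi(0)\sim_{ab}\varphi(1)$, or $k$ is odd and $\varphi(0)=(01)^{\frac{k-1}{2}}0$, $\varphi(1)=(10)^{\frac{k-1}{2}}1$.
   Context: A morphism $\varphi$ on $\{0,1\}^*$ is $k$-uniform if $|\varphi(0)|=|\varphi(1)|=k$, and primitive if for some $m$ both $\varphi^m(0)$ and $\varphi^m(1)$ contain both letters. $|u|_a$ is the number of occurrences of letter $a$ in $u$; $u\sim_{ab}v$ (abelian equivalent) means $|u|_a=|v|_a$ for every letter $a$. For nonempty finite $u$, $\rho_a(u)=|u|_a/|u|$. An infinite word $w$ is abelian (ultimately) periodic if $w=v_0v_1v_2\cdots$ with finite words $v_i$ such that $v_i\sim_{ab}v_j$ for all $i,j\ge1$. It is weak abelian periodic if $w=v_0v_1v_2\cdots$ with $v_0$ finite and $v_1,v_2,\dots$ nonempty finite words with $\rho_a(v_i)=\rho_a(v_j)$ for all letters $a$ and all $i,j\ge1$, and bounded weak abelian periodic if such a factorization exists with $|v_i|\le C$ for all $i$ for some constant $C$. *)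

theory Defs
  imports Complex_Main
begin

text \<open>Words over the alphabet {0,1} are lists of naturals with letters in {0,1};
infinite words are functions nat => nat. A morphism is given by the images
phi 0 and phi 1 of the two letters.\<close>

definition morph :: "(nat \<Rightarrow> nat list) \<Rightarrow> nat list \<Rightarrow> nat list" where
  "morph phi xs = concat (map phi xs)"

definition binary_word :: "nat list \<Rightarrow> bool" where
  "binary_word u \<longleftrightarrow> set u \<subseteq> {0, 1}"

definition binary_morphism :: "(nat \<Rightarrow> nat list) \<Rightarrow> bool" where
  "binary_morphism phi \<longleftrightarrow> binary_word (phi 0) \<and> binary_word (phi 1)"

definition uniform_morphism :: "nat \<Rightarrow> (nat \<Rightarrow> nat list) \<Rightarrow> bool" where
  "uniform_morphism k phi \<longleftrightarrow> length (phi 0) = k \<and> length (phi 1) = k"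

definition primitive_morphism :: "(nat \<Rightarrow> nat list) \<Rightarrow> bool" where
  "primitive_morphism phi \<longleftrightarrow>
     (\<exists>m. \<forall>a\<in>{0::nat,1}. \<forall>b\<in>{0::nat,1}. b \<in> set ((morph phi ^^ m) [a]))"

definition factor :: "(nat \<Rightarrow> nat) \<Rightarrow> nat \<Rightarrow> nat \<Rightarrow> nat list" where
  "factor w i j = map w [i..<j]"

definition binary_infinite_word :: "(nat \<Rightarrow> nat) \<Rightarrow> bool" where
  "binary_infinite_word w \<longleftrightarrow> (\<forall>n. w n \<in> {0, 1})"

text \<open>phi(w) = w: the image of every prefix of w is a prefix of w.\<close>
definition fixed_point :: "(nat \<Rightarrow> nat list) \<Rightarrow> (nat \<Rightarrow> nat) \<Rightarrow> bool" where
  "fixed_point phi w \<longleftrightarrow>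
     (\<forall>n. morph phi (factor w 0 n) = factor w 0 (length (morph phi (factor w 0 n))))"

definition abelian_equiv :: "nat list \<Rightarrow> nat list \<Rightarrow> bool" where
  "abelian_equiv u v \<longleftrightarrow> (\<forall>a. count_list u a = count_list v a)"

definition rho :: "nat \<Rightarrow> nat list \<Rightarrow> real" where
  "rho a u = real (count_list u a) / real (length u)"

text \<open>A factorization w = v0 v1 v2 ... with v1, v2, ... nonempty is given by a strictly
increasing sequence of cut points p: v0 = w[0..p 0), and v_(i+1) = w[p i .. p (i+1)).\<close>
definition block :: "(nat \<Rightarrow> nat) \<Rightarrow> (nat \<Rightarrow> nat) \<Rightarrow> nat \<Rightarrow> nat list" where
  "block w p i = factor w (p i) (p (Suc i))"

definition abelian_periodic :: "(nat \<Rightarrow> nat) \<Rightarrow> bool" where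
  "abelian_periodic w \<longleftrightarrow>
     (\<exists>p. strict_mono p \<and> (\<forall>i j. abelian_equiv (block w p i) (block w p j)))"

definition weak_abelian_periodic :: "(nat \<Rightarrow> nat) \<Rightarrow> bool" where
  "weak_abelian_periodic w \<longleftrightarrow>
     (\<exists>p. strict_mono p \<and> (\<forall>i j a. rho a (block w p i) = rho a (block w p j)))"

definition bounded_weak_abelian_periodic :: "(nat \<Rightarrow> nat) \<Rightarrow> bool" where
  "bounded_weak_abelian_periodic w \<longleftrightarrow>
     (\<exists>p C. strict_mono p \<and> (\<forall>i j a. rho a (block w p i) = rho a (block w p j))
            \<and> (\<forall>i. length (block w p i) \<le> C))"

end

theory Submission
  imports Defs "HOL-Library.Multiset"
begin

text \<open>If phi(0) and phi(1) are abelian equivalent, w = phi(w) is cut into the abelian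
  equivalent blocks phi(w_n); in the exceptional case w alternates and is cut into blocks of
  length 2. Abelian periodicity trivially gives bounded weak abelian periodicity.

  Conversely, bounded weak abelian periodicity with frequency r makes the discrepancy
  D(n) = |w[0,n)|_0 - r n bounded. Since w = phi(w), D(kn + t) = g D(n) + e n + F_{w_n}(t),
  where g = |phi(0)|_0 - |phi(1)|_0 and F_x(t) is the discrepancy of the prefix of length t of
  phi(x). Boundedness forces e = 0, and then |g| < 2, since otherwise D vanishes identically,
  which primitivity excludes. If g = 0 the images are abelian equivalent. Otherwise (k - g) D(n)
  is an integer, so D takes finitely many values. Comparing the recurrence at the extreme values
  of D, over all positions and over the positions carrying a fixed letter, rules out g = -1,
  and for g = 1 shows that the prefix walks of phi(0) and phi(1) stay on opposite sides of 0
  and read 0, resp. 1, only on the level 0. This forces r = 1/2 and the alternating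
  shape of both images.\<close>

section \<open>Finite words\<close>

lemma morph_Nil [simp]: "morph phi [] = []"
  by (simp add: morph_def)

lemma morph_Cons [simp]: "morph phi (x # xs) = phi x @ morph phi xs"
  by (simp add: morph_def)

lemma morph_append [simp]: "morph phi (xs @ ys) = morph phi xs @ morph phi ys"
  by (simp add: morph_def)

lemma length_factor [simp]: "length (factor w i j) = j - i"
  by (simp add: factor_def)

lemma factor_append: "i \<le> j \<Longrightarrow> j \<le> l \<Longrightarrow> factor w i j @ factor w j l = factor w i l"
  unfolding factor_def by (metis map_append upt_add_eq_append le_add_diff_inverse)

lemma factor_Suc: "i \<le> j \<Longrightarrow> factor w i (Suc j) = factor w i j @ [w j]"
  by (simp add: factor_def)

lemma take_factor: "t \<le> n \<Longrightarrow> take t (factor w 0 n) = factor w 0 t"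
  by (simp add: factor_def take_map)

lemma binary_word_factor: "binary_infinite_word w \<Longrightarrow> binary_word (factor w i j)"
  unfolding binary_infinite_word_def binary_word_def factor_def set_map image_subset_iff by blast

lemma binary_word_Nil [simp]: "binary_word []"
  by (simp add: binary_word_def)

lemma binary_word_Cons [simp]: "binary_word (x # u) \<longleftrightarrow> x \<in> {0, 1} \<and> binary_word u"
  by (simp add: binary_word_def)

lemma binary_word_append [simp]: "binary_word (u @ v) \<longleftrightarrow> binary_word u \<and> binary_word v"
  by (auto simp: binary_word_def)

lemma binary_word_nth: "binary_word u \<Longrightarrow> i < length u \<Longrightarrow> u ! i \<in> {0, 1}"
  unfolding binary_word_def using nth_mem by blast

lemma length_eq_count_0_add_count_1:
  "binary_word u \<Longrightarrow> length u = count_list u 0 + count_list u 1"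
  using sum_count_set[of u "{0, 1}"] by (simp add: binary_word_def)

lemma abelian_equiv_iff_mset: "abelian_equiv u v \<longleftrightarrow> mset u = mset v"
  by (simp add: abelian_equiv_def multiset_eq_iff count_mset)

lemma binary_abelian_equivI:
  assumes "binary_word u" "binary_word v" "length u = length v"
    and "count_list u 0 = count_list v 0"
  shows "abelian_equiv u v"
  unfolding abelian_equiv_def
proof
  fix a
  show "count_list u a = count_list v a"
  proof (cases "a \<in> {0, 1}")
    case True
    then show ?thesis
      using assms length_eq_count_0_add_count_1[of u] length_eq_count_0_add_count_1[of v] by auto
  next
    case False
    then have "a \<notin> set u" "a \<notin> set v"
      using assms(1,2) by (auto simp: binary_word_def)
    then show ?thesis by simp
  qed
qed

lemma nth_concat_replicate_pair:
  "i < 2 * h \<Longrightarrow> concat (replicate h [a, b]) ! i = (if even i then a else b)"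
proof (induction h arbitrary: i)
  case (Suc h)
  show ?case
  proof (cases "i < 2")
    case True
    then show ?thesis by (cases i) (auto simp: less_2_cases_iff)
  next
    case False
    then have "concat (replicate (Suc h) [a, b]) ! i = concat (replicate h [a, b]) ! (i - 2)"
      by (simp add: nth_append numeral_2_eq_2)
    with False Suc show ?thesis by auto
  qed
qed simp

lemma nth_alternating:
  assumes "c \<in> {0, 1}" "t \<le> 2 * h"
  shows "(concat (replicate h [c, 1 - c]) @ [c]) ! t = (c + t) mod 2"
proof (cases "t = 2 * h")
  case True
  with assms(1) show ?thesis by (auto simp: nth_append length_concat sum_list_replicate)
next
  case False
  with assms have "t < 2 * h" by simp
  with assms(1) show ?thesis
    by (auto simp: nth_append nth_concat_replicate_pair length_concat sum_list_replicate
        mod_Suc elim: oddE)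
qed

lemma alternating_eqI:
  assumes "c \<in> {0, 1}" "length u = 2 * h + 1" "\<And>t. t < length u \<Longrightarrow> u ! t = (c + t) mod 2"
  shows "u = concat (replicate h [c, 1 - c]) @ [c]"
  using assms nth_alternating[OF assms(1)]
  by (intro nth_equalityI) (auto simp: length_concat sum_list_replicate)

section \<open>Discrepancy walks\<close>

definition discrepancy :: "real \<Rightarrow> nat list \<Rightarrow> real" where
  "discrepancy r u = real (count_list u 0) - r * real (length u)"

lemma discrepancy_Nil [simp]: "discrepancy r [] = 0"
  by (simp add: discrepancy_def)

lemma discrepancy_Cons [simp]:
  "discrepancy r (x # u) = (if x = 0 then 1 else 0) - r + discrepancy r u"
  by (simp add: discrepancy_def algebra_simps)

lemma discrepancy_append [simp]:
  "discrepancy r (u @ v) = discrepancy r u + discrepancy r v"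
  by (simp add: discrepancy_def algebra_simps)

lemma discrepancy_take_Suc:
  "t < length u \<Longrightarrow> discrepancy r (take (Suc t) u) = discrepancy r (take t u) + discrepancy r [u ! t]"
  by (simp add: take_Suc_conv_app_nth del: discrepancy_Cons)

lemma abs_discrepancy_le: "\<bar>discrepancy r u\<bar> \<le> (1 + \<bar>r\<bar>) * real (length u)"
proof -
  have "\<bar>discrepancy r u\<bar> \<le> real (count_list u 0) + \<bar>r\<bar> * real (length u)"
    unfolding discrepancy_def using abs_triangle_ineq4 by (metis abs_mult abs_of_nat)
  also have "\<dots> \<le> (1 + \<bar>r\<bar>) * real (length u)"
    using count_le_length[of u 0] by (simp add: algebra_simps)
  finally show ?thesis .
qed

lemma discrepancy_eq_0_iff_rho: "u \<noteq> [] \<Longrightarrow> discrepancy r u = 0 \<longleftrightarrow> rho 0 u = r"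
  by (auto simp: discrepancy_def rho_def field_simps)

text \<open>Read u as a walk with step 1 - r on a letter 0 and -r on a letter 1, so that its height
  after t letters is the discrepancy of the prefix of length t. Seen from the side of the
  letter c (heights multiplied by (-1)^c), a grounded walk never goes below 0 and reads c
  only at height at most 0.\<close>
definition grounded_walk :: "nat \<Rightarrow> real \<Rightarrow> nat list \<Rightarrow> bool" where
  "grounded_walk c r u \<longleftrightarrow>
     (\<forall>t \<le> length u. 0 \<le> (-1) ^ c * discrepancy r (take t u)) \<and>
     (\<forall>t < length u. u ! t = c \<longrightarrow> (-1) ^ c * discrepancy r (take t u) \<le> 0)"

lemma grounded_walkD:
  assumes "grounded_walk c r u"
  shows "t \<le> length u \<Longrightarrow> 0 \<le> (-1) ^ c * discrepancy r (take t u)"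
    and "t < length u \<Longrightarrow> u ! t = c \<Longrightarrow> (-1) ^ c * discrepancy r (take t u) \<le> 0"
  using assms by (auto simp: grounded_walk_def)

lemma grounded_walk_half:
  assumes walk: "grounded_walk c r u" and u: "binary_word u" "2 \<le> length u"
    and c: "c \<in> {0, 1}" and r: "0 < r" "r < 1"
  shows "0 \<le> (-1) ^ c * (1 - 2 * r)"
proof -
  obtain x y v where u_eq: "u = x # y # v"
    using u(2) by (metis Suc_le_length_iff numeral_2_eq_2)
  have letters: "x \<in> {0, 1}" "y \<in> {0, 1}"
    using u(1) by (auto simp: u_eq binary_word_def)
  have first: "x = c"
  proof (rule ccontr)
    assume "x \<noteq> c"
    then have "(-1) ^ c * discrepancy r [x] < 0"
      using letters(1) c r by auto
    with grounded_walkD(1)[OF walk, of 1] show False by (simp add: u_eq)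
  qed
  then have "0 < (-1) ^ c * discrepancy r [x]"
    using c r by auto
  then have "y \<noteq> c"
    using grounded_walkD(2)[OF walk, of 1] by (auto simp: u_eq)
  with first letters(2) c have "take 2 u = [c, 1 - c]"
    by (auto simp: u_eq)
  then show ?thesis
    using grounded_walkD(1)[OF walk, of 2] u(2) c by auto
qed

lemma grounded_walk_alternates:
  assumes walk: "grounded_walk c (1/2) u" and u: "binary_word u" and c: "c \<in> {0, 1}"
  shows "t \<le> length u \<Longrightarrow> (-1) ^ c * discrepancy (1/2) (take t u) = (if even t then 0 else 1/2)
           \<and> (\<forall>s < t. u ! s = (c + s) mod 2)"
proof (induction t)
  case (Suc t)
  then have t: "t < length u" by simp
  with Suc.IH have height: "(-1) ^ c * discrepancy (1/2) (take t u) = (if even t then 0 else 1/2)"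
    and prefix: "\<forall>s < t. u ! s = (c + s) mod 2" by auto
  have step: "(-1) ^ c * discrepancy (1/2) (take (Suc t) u)
      = (-1) ^ c * discrepancy (1/2) (take t u) + (if u ! t = c then 1/2 else -1/2)"
    using discrepancy_take_Suc[OF t, of "1/2"] binary_word_nth[OF u t] c by auto
  have letter: "u ! t = c \<longleftrightarrow> even t"
  proof (cases "even t")
    case True
    have "u ! t = c"
    proof (rule ccontr)
      assume "u ! t \<noteq> c"
      then show False
        using grounded_walkD(1)[OF walk, of "Suc t"] t step height True by simp
    qed
    with True show ?thesis by simp
  next
    case False
    then show ?thesis
      using grounded_walkD(2)[OF walk t] height by auto
  qed
  have "(c + t) mod 2 = (if even t then c else 1 - c)"
    using c by (auto elim: oddE)
  then have "u ! t = (c + t) mod 2"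
    using letter binary_word_nth[OF u t] c by auto
  then show ?case
    using step height prefix letter by (auto simp: less_Suc_eq)
qed simp

lemma alternating_if_grounded_walks:
  assumes walk0: "grounded_walk 0 r u0" and walk1: "grounded_walk 1 r u1"
    and u0: "binary_word u0" "length u0 = k" and u1: "binary_word u1" "length u1 = k"
    and k: "2 \<le> k" and r: "0 < r" "r < 1" and ends_off_level: "discrepancy r u0 \<noteq> 0"
  shows "odd k \<and> u0 = concat (replicate ((k - 1) div 2) [0, 1]) @ [0]
               \<and> u1 = concat (replicate ((k - 1) div 2) [1, 0]) @ [1]"
proof -
  have "r = 1/2"
    using grounded_walk_half[OF walk0 u0(1)] grounded_walk_half[OF walk1 u1(1)] u0 u1 k r by simp
  note alt0 = grounded_walk_alternates[OF walk0[unfolded this] u0(1), of k]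
    and alt1 = grounded_walk_alternates[OF walk1[unfolded this] u1(1), of k]
  have "odd k"
    using alt0 ends_off_level \<open>r = 1/2\<close> u0(2) by auto
  define h where "h = (k - 1) div 2"
  with \<open>odd k\<close> have h: "k = 2 * h + 1"
    by presburger
  have "u0 = concat (replicate h [0, 1 - 0]) @ [0]"
    using alt0 u0(2) h by (intro alternating_eqI) auto
  moreover have "u1 = concat (replicate h [1, 1 - 1]) @ [1]"
    using alt1 u1(2) h by (intro alternating_eqI) auto
  ultimately show ?thesis
    using \<open>odd k\<close> h_def by simp
qed

section \<open>Abelian periodicity and bounded discrepancy\<close>

lemma bounded_weak_abelian_periodic_if_abelian_periodic:
  assumes "abelian_periodic w"
  shows "bounded_weak_abelian_periodic w"
proof -
  obtain p where p: "strict_mono p" "\<And>i j. mset (block w p i) = mset (block w p j)"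
    using assms by (auto simp: abelian_periodic_def abelian_equiv_iff_mset)
  have length: "length (block w p i) = length (block w p j)" for i j
    using arg_cong[OF p(2)[of i j], of size] by simp
  have count: "count_list (block w p i) a = count_list (block w p j) a" for i j a
    using arg_cong[OF p(2)[of i j], of "\<lambda>M. count M a"] by (simp add: count_mset)
  have "rho a (block w p i) = rho a (block w p j)" for i j a
    using length[of i j] count[of i a j] by (simp add: rho_def)
  moreover have "length (block w p i) \<le> length (block w p 0)" for i
    using length[of i 0] by simp
  ultimately show ?thesis
    unfolding bounded_weak_abelian_periodic_def using p(1) by blast
qed

lemma strict_mono_interval:
  assumes "strict_mono (p :: nat \<Rightarrow> nat)" "p 0 \<le> n"
  shows "\<exists>i. p i \<le> n \<and> n < p (Suc i)"
  using assms(2)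
proof (induction n rule: dec_induct)
  case base
  then show ?case
    using strict_monoD[OF assms(1), of 0 1] by auto
next
  case (step n)
  then obtain i where i: "p i \<le> n" "n < p (Suc i)" by auto
  show ?case
  proof (cases "Suc n < p (Suc i)")
    case True
    with i show ?thesis by (intro exI[of _ i]) simp
  next
    case False
    with i have "Suc n = p (Suc i)" by simp
    with strict_monoD[OF assms(1), of "Suc i" "Suc (Suc i)"] show ?thesis by auto
  qed
qed

lemma discrepancy_prefix_split:
  "m \<le> n \<Longrightarrow> discrepancy r (factor w 0 n) = discrepancy r (factor w 0 m) + discrepancy r (factor w m n)"
  using factor_append[of 0 m n w] by (simp flip: discrepancy_append)

lemma discrepancy_at_cut_points:
  assumes p: "strict_mono p" and rho: "\<And>i. rho 0 (block w p i) = r"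
  shows "discrepancy r (factor w 0 (p i)) = discrepancy r (factor w 0 (p 0))"
proof (induction i)
  case (Suc i)
  have "p i < p (Suc i)"
    using p by (simp add: strict_mono_def)
  then have "discrepancy r (block w p i) = 0"
    using rho[of i] by (simp add: discrepancy_eq_0_iff_rho block_def factor_def)
  with Suc \<open>p i < p (Suc i)\<close> show ?case
    using discrepancy_prefix_split[of "p i" "p (Suc i)" r w] by (simp add: block_def)
qed simp

lemma bounded_discrepancy_if_bounded_weak_abelian_periodic:
  assumes "bounded_weak_abelian_periodic w"
  shows "\<exists>r B. \<forall>n. \<bar>discrepancy r (factor w 0 n)\<bar> \<le> B"
proof -
  obtain p C where p: "strict_mono p" "\<And>i j a. rho a (block w p i) = rho a (block w p j)"
    and short: "\<And>i. length (block w p i) \<le> C"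
    using assms unfolding bounded_weak_abelian_periodic_def by blast
  define r where "r = rho 0 (block w p 0)"
  define D where "D n = discrepancy r (factor w 0 n)" for n
  have "rho 0 (block w p i) = r" for i
    unfolding r_def by (rule p(2))
  then have cuts: "D (p i) = D (p 0)" for i
    unfolding D_def by (rule discrepancy_at_cut_points[OF p(1)])
  have "\<bar>D n\<bar> \<le> \<bar>D (p 0)\<bar> + (1 + \<bar>r\<bar>) * (real C + real (p 0))" for n
  proof (cases "n < p 0")
    case True
    have "\<bar>D n\<bar> \<le> (1 + \<bar>r\<bar>) * real n"
      using abs_discrepancy_le[of r "factor w 0 n"] by (simp add: D_def)
    also have "\<dots> \<le> (1 + \<bar>r\<bar>) * (real C + real (p 0))"
      using True by (intro mult_left_mono) auto
    finally show ?thesis by simp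
  next
    case False
    then obtain i where i: "p i \<le> n" "n < p (Suc i)"
      using strict_mono_interval[OF p(1), of n] by auto
    have "n - p i \<le> C"
      using short[of i] i by (simp add: block_def)
    have "\<bar>discrepancy r (factor w (p i) n)\<bar> \<le> (1 + \<bar>r\<bar>) * real (n - p i)"
      using abs_discrepancy_le[of r "factor w (p i) n"] by simp
    also have "\<dots> \<le> (1 + \<bar>r\<bar>) * (real C + real (p 0))"
      using \<open>n - p i \<le> C\<close> by (intro mult_left_mono) auto
    finally show ?thesis
      using discrepancy_prefix_split[OF i(1), of r w] cuts[of i] unfolding D_def by linarith
  qed
  then show ?thesis
    unfolding D_def by blast
qed

section \<open>Fixed points of primitive uniform morphisms\<close>

locale binary_uniform_morphism =
  fixes phi :: "nat \<Rightarrow> nat list" and k :: nat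
  assumes binary: "binary_morphism phi" and uniform: "uniform_morphism k phi"
begin

lemma binary_word_image: "x \<in> {0, 1} \<Longrightarrow> binary_word (phi x)"
  using binary by (auto simp: binary_morphism_def)

lemma length_image: "x \<in> {0, 1} \<Longrightarrow> length (phi x) = k"
  using uniform by (auto simp: uniform_morphism_def)

lemma binary_word_morph: "binary_word u \<Longrightarrow> binary_word (morph phi u)"
  by (induction u) (auto simp: binary_word_image)

lemma length_morph: "binary_word u \<Longrightarrow> length (morph phi u) = k * length u"
  by (induction u) (auto simp: length_image)

lemma length_iterate: "binary_word u \<Longrightarrow> length ((morph phi ^^ m) u) = k ^ m * length u"
proof (induction m)
  case (Suc m)
  moreover have "binary_word ((morph phi ^^ m) u)"
    using Suc.prems by (induction m) (auto simp: binary_word_morph)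
  ultimately show ?case
    by (simp add: length_morph)
qed simp

definition count_gap :: int where
  "count_gap = int (count_list (phi 0) 0) - int (count_list (phi 1) 0)"

lemma abelian_equiv_images_iff: "abelian_equiv (phi 0) (phi 1) \<longleftrightarrow> count_gap = 0"
  using binary_abelian_equivI[OF binary_word_image binary_word_image] length_image
  by (auto simp: count_gap_def abelian_equiv_def)

text \<open>A letter 1 of u contributes count_list (phi 1) 0 - r k, and a letter 0 contributes
  count_list (phi 0) 0 - r k = count_gap (1 - r) + (count_list (phi 1) 0 - r k).\<close>
lemma discrepancy_morph:
  "binary_word u \<Longrightarrow> discrepancy r (morph phi u)
     = of_int count_gap * discrepancy r u
       + (real (count_list (phi 1) 0) - r * (real k - of_int count_gap)) * real (length u)"
proof (induction u)
  case (Cons x u)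
  then have "x \<in> {0, 1}" "length (phi x) = k"
    using length_image by auto
  with Cons show ?case
    by (auto simp: discrepancy_def count_gap_def algebra_simps)
qed simp

end

locale primitive_uniform_morphism = binary_uniform_morphism +
  assumes primitive: "primitive_morphism phi"
begin

lemma other_letter_in_image:
  assumes a: "a \<in> {0, 1}"
  shows "1 - a \<in> set (phi a)"
proof (rule ccontr)
  assume "1 - a \<notin> set (phi a)"
  with binary_word_image[OF a] a have image: "set (phi a) \<subseteq> {a}"
    by (auto simp: binary_word_def)
  have "set (morph phi u) \<subseteq> {a}" if "set u \<subseteq> {a}" for u
    using that image by (induction u) auto
  then have "set ((morph phi ^^ m) [a]) \<subseteq> {a}" for m
    by (induction m) auto
  moreover obtain m where "1 - a \<in> set ((morph phi ^^ m) [a])"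
    using primitive a by (auto simp: primitive_morphism_def)
  ultimately have "1 - a \<in> {a}"
    by blast
  with a show False
    by auto
qed

lemma two_le_k: "2 \<le> k"
proof (rule ccontr)
  assume "\<not> 2 \<le> k"
  obtain m where "{0, 1} \<subseteq> set ((morph phi ^^ m) [0])"
    using primitive by (auto simp: primitive_morphism_def)
  then have "card {0::nat, 1} \<le> card (set ((morph phi ^^ m) [0]))"
    by (intro card_mono) simp_all
  also have "\<dots> \<le> length ((morph phi ^^ m) [0])"
    by (rule card_length)
  also have "\<dots> = k ^ m"
    by (simp add: length_iterate)
  also have "\<dots> \<le> 1"
    using \<open>\<not> 2 \<le> k\<close> by (intro power_le_one) auto
  finally show False by simp
qed

lemma take_1_image: "x \<in> {0, 1} \<Longrightarrow> take 1 (phi x) = [phi x ! 0]"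
  using length_image[of x] two_le_k by (cases "phi x") auto

lemma count_gap_less: "count_gap < int k"
proof -
  have "count_list (phi 0) 0 \<le> k"
    using count_le_length[of "phi 0" 0] length_image[of 0] by simp
  moreover have "count_list (phi 1) 0 \<noteq> 0"
    using other_letter_in_image[of 1] by (simp add: count_list_0_iff)
  ultimately show ?thesis
    by (simp add: count_gap_def)
qed

end

locale primitive_fixed_point = primitive_uniform_morphism +
  fixes w :: "nat \<Rightarrow> nat"
  assumes binary_w: "binary_infinite_word w" and fixed: "fixed_point phi w"
begin

lemma w_letter: "w n \<in> {0, 1}"
  using binary_w by (simp add: binary_infinite_word_def)

lemma binary_word_prefix: "binary_word (factor w i j)"
  using binary_w by (rule binary_word_factor)

lemma morph_prefix: "morph phi (factor w 0 n) = factor w 0 (k * n)"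
proof -
  have "morph phi (factor w 0 n) = factor w 0 (length (morph phi (factor w 0 n)))"
    using fixed by (simp add: fixed_point_def)
  then show ?thesis
    by (simp add: length_morph[OF binary_word_prefix])
qed

lemma prefix_mult_add:
  assumes "t \<le> k"
  shows "factor w 0 (k * n + t) = morph phi (factor w 0 n) @ take t (phi (w n))"
proof -
  have "factor w 0 (k * Suc n) = morph phi (factor w 0 n) @ phi (w n)"
    using morph_prefix[of "Suc n"] by (simp add: factor_Suc)
  then have "take (k * n + t) (factor w 0 (k * Suc n)) = morph phi (factor w 0 n) @ take t (phi (w n))"
    using length_morph[OF binary_word_prefix[of 0 n]] by simp
  then show ?thesis
    using assms by (simp add: take_factor)
qed

lemma nth_mult_add:
  assumes "t < k"
  shows "w (k * n + t) = phi (w n) ! t"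
proof -
  have "factor w 0 (k * n + t) @ [w (k * n + t)] = morph phi (factor w 0 n) @ take (Suc t) (phi (w n))"
    using prefix_mult_add[of "Suc t" n] assms by (simp add: factor_Suc)
  then show ?thesis
    using prefix_mult_add[of t n] assms length_image[OF w_letter]
    by (simp add: take_Suc_conv_app_nth)
qed

lemma factor_mult: "factor w (k * n) (k * n + k) = phi (w n)"
proof -
  have "factor w 0 (k * n) @ factor w (k * n) (k * n + k) = factor w 0 (k * n + k)"
    by (simp add: factor_append)
  also have "\<dots> = factor w 0 (k * n) @ phi (w n)"
    using prefix_mult_add[of k n] length_image[OF w_letter] by (simp add: morph_prefix)
  finally show ?thesis by simp
qed

lemma image_first_letter: "phi (w 0) ! 0 = w 0"
  using nth_mult_add[of 0 0] two_le_k by simp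

lemma discrepancy_prefix_mult_add:
  assumes "t \<le> k"
  shows "discrepancy r (factor w 0 (k * n + t))
    = of_int count_gap * discrepancy r (factor w 0 n)
      + (real (count_list (phi 1) 0) - r * (real k - of_int count_gap)) * real n
      + discrepancy r (take t (phi (w n)))"
  using prefix_mult_add[OF assms] discrepancy_morph[OF binary_word_prefix] by simp

lemma abelian_periodic_if_abelian_equiv_images:
  assumes "abelian_equiv (phi 0) (phi 1)"
  shows "abelian_periodic w"
proof -
  have "strict_mono (\<lambda>i. k * i)"
    using two_le_k by (intro strict_monoI) simp
  moreover have "block w (\<lambda>i. k * i) i = phi (w i)" for i
    using factor_mult[of i] by (simp add: block_def algebra_simps)
  moreover have "abelian_equiv (phi (w i)) (phi (w j))" for i j
    using w_letter[of i] w_letter[of j] assms by (auto simp: abelian_equiv_def)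
  ultimately show ?thesis
    unfolding abelian_periodic_def by (intro exI[of _ "\<lambda>i. k * i"]) simp
qed

lemma parity_if_alternating_images:
  assumes k: "odd k"
    and images: "phi 0 = concat (replicate ((k - 1) div 2) [0, 1]) @ [0]"
                "phi 1 = concat (replicate ((k - 1) div 2) [1, 0]) @ [1]"
  shows "w n = (w 0 + n) mod 2"
proof -
  define h where "h = (k - 1) div 2"
  with k have kh: "k = 2 * h + 1"
    by presburger
  have "phi x = concat (replicate h [x, 1 - x]) @ [x]" if "x \<in> {0, 1}" for x
    using that images unfolding h_def by auto
  then have image: "phi x ! t = (x + t) mod 2" if "x \<in> {0, 1}" "t < k" for x t
    using nth_alternating[OF that(1), of t h] that kh by simp
  show ?thesis
  proof (induction n rule: less_induct)
    case (less n)
    show ?case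
    proof (cases "n = 0")
      case False
      define q where "q = n div k"
      have "q < n"
        using False two_le_k by (simp add: q_def)
      have "w n = phi (w q) ! (n mod k)"
        using nth_mult_add[of "n mod k" q] two_le_k by (simp add: q_def)
      also have "\<dots> = (w q + n mod k) mod 2"
        using image[OF w_letter[of q], of "n mod k"] two_le_k by simp
      also have "\<dots> = (w 0 + q + n mod k) mod 2"
        using less.IH[OF \<open>q < n\<close>] by (simp add: mod_add_left_eq)
      also have "\<dots> = (w 0 + q + n mod k + (q * h) * 2) mod 2"
        by simp
      also have "w 0 + q + n mod k + (q * h) * 2 = w 0 + n"
        using div_mult_mod_eq[of n k] kh by (simp add: q_def algebra_simps)
      finally show ?thesis .
    qed (use w_letter[of 0] in auto)
  qed
qed

lemma abelian_periodic_if_alternating_images: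
  assumes "odd k"
    and "phi 0 = concat (replicate ((k - 1) div 2) [0, 1]) @ [0]"
        "phi 1 = concat (replicate ((k - 1) div 2) [1, 0]) @ [1]"
  shows "abelian_periodic w"
proof -
  have "strict_mono (\<lambda>i. 2 * i :: nat)"
    by (intro strict_monoI) simp
  moreover have "block w (\<lambda>i. 2 * i) i = [w 0 mod 2, (w 0 + 1) mod 2]" for i
    using parity_if_alternating_images[OF assms, of "2 * i"]
      parity_if_alternating_images[OF assms, of "2 * i + 1"]
    by (simp add: block_def factor_def upt_rec mod_add_left_eq)
  ultimately show ?thesis
    unfolding abelian_periodic_def abelian_equiv_def by (intro exI[of _ "\<lambda>i. 2 * i"]) simp
qed

end

section \<open>Fixed points with bounded discrepancy\<close>

locale bounded_discrepancy = primitive_fixed_point +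
  fixes r B :: real
  assumes bounded: "\<bar>discrepancy r (factor w 0 n)\<bar> \<le> B"
begin

abbreviation D :: "nat \<Rightarrow> real" where
  "D n \<equiv> discrepancy r (factor w 0 n)"

lemma drift_vanishes: "real (count_list (phi 1) 0) = r * (real k - of_int count_gap)"
proof (rule ccontr)
  define e where "e = real (count_list (phi 1) 0) - r * (real k - of_int count_gap)"
  assume "\<not> ?thesis"
  then have "e \<noteq> 0"
    by (simp add: e_def)
  then obtain n where n: "B + \<bar>of_int count_gap\<bar> * B < real n * \<bar>e\<bar>"
    using ex_less_of_nat_mult[of "\<bar>e\<bar>"] by auto
  have "e * real n = D (k * n) - of_int count_gap * D n"
    using discrepancy_prefix_mult_add[of 0 r n] by (simp add: e_def)
  then have "\<bar>e * real n\<bar> \<le> \<bar>D (k * n)\<bar> + \<bar>of_int count_gap\<bar> * \<bar>D n\<bar>"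
    by (metis abs_mult abs_triangle_ineq4)
  also have "\<dots> \<le> B + \<bar>of_int count_gap\<bar> * B"
    using bounded by (intro add_mono mult_left_mono) auto
  finally show False
    using n by (simp add: abs_mult mult.commute)
qed

lemma discrepancy_recurrence:
  "t \<le> k \<Longrightarrow> D (k * n + t) = of_int count_gap * D n + discrepancy r (take t (phi (w n)))"
  using discrepancy_prefix_mult_add[of t r n] drift_vanishes by simp

lemma discrepancy_images:
  "discrepancy r (phi 0) = of_int count_gap * (1 - r)"
  "discrepancy r (phi 1) = - of_int count_gap * r"
  using drift_vanishes length_image[of 0] length_image[of 1]
  by (auto simp: discrepancy_def count_gap_def algebra_simps)

lemma zero_less_r: "0 < r"
proof -
  have "count_list (phi 1) 0 \<noteq> 0"
    using other_letter_in_image[of 1] by (simp add: count_list_0_iff)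
  then have "0 < r * (real k - of_int count_gap)"
    unfolding drift_vanishes[symmetric] by simp
  moreover have "0 < real k - of_int count_gap"
    using count_gap_less by simp
  ultimately show ?thesis
    by (simp add: zero_less_mult_iff)
qed

lemma r_less_1: "r < 1"
proof -
  have "count_list (phi 0) 0 \<noteq> k"
    using other_letter_in_image[of 0] length_eq_count_0_add_count_1[OF binary_word_image[of 0]]
      length_image[of 0] by (simp add: count_list_0_iff)
  then have "count_list (phi 0) 0 < k"
    using count_le_length[of "phi 0" 0] length_image[of 0] by simp
  then have "r * (real k - of_int count_gap) < 1 * (real k - of_int count_gap)"
    unfolding drift_vanishes[symmetric] by (simp add: count_gap_def)
  moreover have "0 < real k - of_int count_gap"
    using count_gap_less by simp
  ultimately show ?thesis
    by (simp only: mult_less_cancel_right_pos)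
qed

lemma finite_discrepancy_values: "finite (D ` S)"
proof -
  define q where "q = int k - count_gap"
  have q: "0 < q"
    using count_gap_less by (simp add: q_def)
  define z where "z n = int (count_list (factor w 0 n) 0) * q - int (count_list (phi 1) 0) * int n" for n
  have zD: "of_int q * D n = of_int (z n)" for n
  proof -
    have "of_int q * D n = of_int q * real (count_list (factor w 0 n) 0) - (r * of_int q) * real n"
      by (simp add: discrepancy_def algebra_simps)
    also have "r * of_int q = real (count_list (phi 1) 0)"
      using drift_vanishes by (simp add: q_def)
    finally show ?thesis
      by (simp add: z_def)
  qed
  define M where "M = \<lceil>of_int q * B\<rceil>"
  have bound: "\<bar>of_int (z n)\<bar> \<le> of_int q * B" for n
    using bounded[of n] q by (simp flip: zD add: abs_mult)
  have "z n \<in> {-M..M}" for n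
    using bound[of n] unfolding M_def by (simp add: abs_le_iff le_ceiling_iff) linarith
  moreover have "D n = of_int (z n) / of_int q" for n
    using zD[of n] q by (simp add: field_simps)
  ultimately have "D ` S \<subseteq> (\<lambda>x. of_int x / of_int q) ` {-M..M}"
    by blast
  then show ?thesis
    by (rule finite_subset) simp
qed

lemma discrepancy_attains_min: "S \<noteq> {} \<Longrightarrow> \<exists>m\<in>S. \<forall>n\<in>S. D m \<le> D n"
proof -
  assume "S \<noteq> {}"
  then have "Min (D ` S) \<in> D ` S"
    using finite_discrepancy_values by (intro Min_in) auto
  then obtain m where m: "m \<in> S" "D m = Min (D ` S)"
    by auto
  have "D m \<le> D n" if "n \<in> S" for n
    using Min_le[OF finite_discrepancy_values, of "D n" S] m(2) that by simp
  with m(1) show ?thesis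
    by blast
qed

lemma discrepancy_attains_max: "S \<noteq> {} \<Longrightarrow> \<exists>m\<in>S. \<forall>n\<in>S. D n \<le> D m"
proof -
  assume "S \<noteq> {}"
  then have "Max (D ` S) \<in> D ` S"
    using finite_discrepancy_values by (intro Max_in) auto
  then obtain m where m: "m \<in> S" "D m = Max (D ` S)"
    by auto
  have "D n \<le> D m" if "n \<in> S" for n
    using Max_ge[OF finite_discrepancy_values, of "D n" S] m(2) that by simp
  with m(1) show ?thesis
    by blast
qed

lemma abs_count_gap_less_2: "\<bar>count_gap\<bar> < 2"
proof (rule ccontr)
  assume large: "\<not> \<bar>count_gap\<bar> < 2"
  have scaling: "D (k ^ j * n) = of_int count_gap ^ j * D n" for j n
  proof (induction j)
    case (Suc j)
    have "D (k ^ Suc j * n) = D (k * (k ^ j * n) + 0)"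
      by (simp add: mult.assoc)
    with Suc show ?case
      using discrepancy_recurrence[of 0 "k ^ j * n"] by simp
  qed simp
  have "D n = 0" for n
  proof (rule ccontr)
    assume "D n \<noteq> 0"
    then obtain j where j: "B < real j * \<bar>D n\<bar>"
      using ex_less_of_nat_mult[of "\<bar>D n\<bar>" B] by auto
    have "real j \<le> real (2 ^ j)"
      using less_exp[of j] by linarith
    also have "\<dots> = 2 ^ j"
      by simp
    also have "\<dots> \<le> \<bar>of_int count_gap\<bar> ^ j"
      using large by (intro power_mono) auto
    finally have "real j * \<bar>D n\<bar> \<le> \<bar>D (k ^ j * n)\<bar>"
      by (simp add: scaling abs_mult power_abs mult_right_mono)
    with j bounded[of "k ^ j * n"] show False
      by simp
  qed
  moreover have "D 1 = (if w 0 = 0 then 1 else 0) - r"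
    by (simp add: factor_def)
  ultimately show False
    using zero_less_r r_less_1 by (auto split: if_splits)
qed

lemma count_gap_neq_minus_1: "count_gap \<noteq> -1"
proof
  assume gap: "count_gap = -1"
  then have recurrence: "D (k * n + t) = - D n + discrepancy r (take t (phi (w n)))" if "t \<le> k" for n t
    using discrepancy_recurrence[OF that] by simp
  obtain lo where lo: "\<And>n. D lo \<le> D n"
    using discrepancy_attains_min[of UNIV] by auto
  obtain hi where hi: "\<And>n. D n \<le> D hi"
    using discrepancy_attains_max[of UNIV] by auto
  \<comment> \<open>D (k n) = - D n maps the minimum of D below the maximum and the maximum above the minimum\<close>
  have "D hi = - D lo"
    using recurrence[of 0 lo] recurrence[of 0 hi] lo[of "k * hi"] hi[of "k * lo"] by simp
  then have lo_walk: "discrepancy r (take t (phi (w lo))) \<le> 0"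
    and hi_walk: "0 \<le> discrepancy r (take t (phi (w hi)))" if "t \<le> k" for t
    using recurrence[OF that, of lo] recurrence[OF that, of hi] hi[of "k * lo + t"] lo[of "k * hi + t"]
    by simp_all
  have "w lo = 0"
    using lo_walk[of k] w_letter[of lo] discrepancy_images gap zero_less_r length_image[of 1]
    by auto
  then have "phi 0 ! 0 \<noteq> 0"
    using lo_walk[of 1] two_le_k take_1_image[of 0] r_less_1 by (auto split: if_splits)
  have "w hi = 1"
    using hi_walk[of k] w_letter[of hi] discrepancy_images gap r_less_1 length_image[of 0]
    by auto
  then have "phi 1 ! 0 = 0"
    using hi_walk[of 1] two_le_k take_1_image[of 1] zero_less_r by (auto split: if_splits)
  with \<open>phi 0 ! 0 \<noteq> 0\<close> show False
    using image_first_letter w_letter[of 0] by auto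
qed

lemma grounded_walks_if_count_gap_1:
  assumes gap: "count_gap = 1"
  shows "grounded_walk 0 r (phi 0)" "grounded_walk 1 r (phi 1)"
proof -
  have recurrence: "D (k * n + t) = D n + discrepancy r (take t (phi (w n)))" if "t \<le> k" for n t
    using discrepancy_recurrence[OF that] gap by simp
  obtain lo where lo: "\<And>n. D lo \<le> D n"
    using discrepancy_attains_min[of UNIV] by auto
  obtain hi where hi: "\<And>n. D n \<le> D hi"
    using discrepancy_attains_max[of UNIV] by auto
  have lo_walk: "0 \<le> discrepancy r (take t (phi (w lo)))"
    and hi_walk: "discrepancy r (take t (phi (w hi))) \<le> 0" if "t \<le> k" for t
    using recurrence[OF that, of lo] recurrence[OF that, of hi] lo[of "k * lo + t"] hi[of "k * hi + t"]
    by simp_all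
  have "w lo = 0"
    using lo_walk[of k] w_letter[of lo] discrepancy_images gap zero_less_r length_image[of 1]
    by auto
  have "w hi = 1"
    using hi_walk[of k] w_letter[of hi] discrepancy_images gap r_less_1 length_image[of 0]
    by auto
  obtain n0 where n0: "w n0 = 0" "\<And>n. w n = 0 \<Longrightarrow> D n \<le> D n0"
    using discrepancy_attains_max[of "{n. w n = 0}"] \<open>w lo = 0\<close> by auto
  obtain n1 where n1: "w n1 = 1" "\<And>n. w n = 1 \<Longrightarrow> D n1 \<le> D n"
    using discrepancy_attains_min[of "{n. w n = 1}"] \<open>w hi = 1\<close> by auto
  have "discrepancy r (take t (phi 0)) \<le> 0" if "t < k" "phi 0 ! t = 0" for t
    using recurrence[of t n0] n0 n0(2)[of "k * n0 + t"] nth_mult_add[of t n0] that by simp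
  with lo_walk \<open>w lo = 0\<close> show "grounded_walk 0 r (phi 0)"
    by (simp add: grounded_walk_def length_image)
  have "0 \<le> discrepancy r (take t (phi 1))" if "t < k" "phi 1 ! t = 1" for t
    using recurrence[of t n1] n1 n1(2)[of "k * n1 + t"] nth_mult_add[of t n1] that by simp
  with hi_walk \<open>w hi = 1\<close> show "grounded_walk 1 r (phi 1)"
    by (simp add: grounded_walk_def length_image)
qed

lemma abelian_equiv_or_alternating_images:
  "abelian_equiv (phi 0) (phi 1)
   \<or> (odd k \<and> phi 0 = concat (replicate ((k - 1) div 2) [0, 1]) @ [0]
            \<and> phi 1 = concat (replicate ((k - 1) div 2) [1, 0]) @ [1])"
proof -
  consider "count_gap = 0" | "count_gap = 1"
    using abs_count_gap_less_2 count_gap_neq_minus_1 by linarith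
  then show ?thesis
  proof cases
    case 1
    then show ?thesis
      using abelian_equiv_images_iff by blast
  next
    case 2
    then have "discrepancy r (phi 0) \<noteq> 0"
      using discrepancy_images(1) r_less_1 by simp
    with 2 show ?thesis
      using alternating_if_grounded_walks[OF grounded_walks_if_count_gap_1[OF 2]]
        binary_word_image length_image two_le_k zero_less_r r_less_1 by simp
  qed
qed

end

theorem theorem2:
  fixes phi :: "nat \<Rightarrow> nat list" and k :: nat and w :: "nat \<Rightarrow> nat"
  assumes "binary_morphism phi"
    and "uniform_morphism k phi"
    and "primitive_morphism phi"
    and "binary_infinite_word w"
    and "fixed_point phi w"
  shows "(bounded_weak_abelian_periodic w \<longleftrightarrow> abelian_periodic w)
       \<and> (abelian_periodic w \<longleftrightarrow>
            (abelian_equiv (phi 0) (phi 1)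
             \<or> (odd k \<and> phi 0 = concat (replicate ((k - 1) div 2) [0, 1]) @ [0]
                      \<and> phi 1 = concat (replicate ((k - 1) div 2) [1, 0]) @ [1])))"
proof -
  interpret primitive_fixed_point phi k w
    using assms by unfold_locales
  have images: "abelian_equiv (phi 0) (phi 1)
      \<or> (odd k \<and> phi 0 = concat (replicate ((k - 1) div 2) [0, 1]) @ [0]
               \<and> phi 1 = concat (replicate ((k - 1) div 2) [1, 0]) @ [1])"
    if periodic: "bounded_weak_abelian_periodic w"
  proof -
    obtain r B where "\<And>n. \<bar>discrepancy r (factor w 0 n)\<bar> \<le> B"
      using bounded_discrepancy_if_bounded_weak_abelian_periodic[OF periodic] by blast
    then interpret bounded_discrepancy phi k w r B
      by unfold_locales
    show ?thesis
      by (rule abelian_equiv_or_alternating_images)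
  qed
  show ?thesis
    using images abelian_periodic_if_abelian_equiv_images abelian_periodic_if_alternating_images
      bounded_weak_abelian_periodic_if_abelian_periodic by blast
qed

end
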